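(* Let $m,n\ge 1$ and $k\ge 2$. Then $\dim U_{m,k}=M_{k-1}(n)=\binom{n+k-2}{n}$.
   Context: $mB^n=\{0,1,\ldots,m\}^n$. A polynomial has a zero of multiplicity at least $k$ at $\mathbf a$ if all its partial derivatives of order less than $k$ vanish at $\mathbf a$. For an integer $k\ge 2$, a polynomial $P\in\mathbb{R}[x_1,\ldots,x_n]$ is called $(m,k)$-reduced if two conditions hold: $\deg P\le mn+(m+1)(k-1)-1$, and no monomial of $P$ is divisible by $x_{i_1}^{m+1}\cdots x_{i_k}^{m+1}$ for any indices $i_1,\ldots,i_k$ (not necessarily distinct). $U_{m,k}$ is the real vector space of $(m,k)$-reduced polynomials that have a zero of multiplicity at least $k$ at every point of $mB^n\setminus\{\mathbf 0\}$. $M_j(n)=\binom{n+j-1}{n}$. *)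

theory Defs
  imports "HOL-Analysis.Analysis" "HOL-Library.Function_Algebras"
begin

text \<open>Real polynomials in the variables x_i, i ranging over a finite type 'n
 (so n = CARD('n)), represented by their coefficient functions on exponent
 vectors 'n => nat.\<close>

type_synonym 'n rpoly = "('n \<Rightarrow> nat) \<Rightarrow> real"

definition is_poly :: "('n::finite) rpoly \<Rightarrow> bool" where
  "is_poly P \<longleftrightarrow> finite {\<alpha>. P \<alpha> \<noteq> 0}"

definition mdeg :: "('n::finite \<Rightarrow> nat) \<Rightarrow> nat" where
  "mdeg \<alpha> = (\<Sum>i\<in>UNIV. \<alpha> i)"

definition deg_le :: "('n::finite) rpoly \<Rightarrow> nat \<Rightarrow> bool" where
  "deg_le P d \<longleftrightarrow> (\<forall>\<alpha>. P \<alpha> \<noteq> 0 \<longrightarrow> mdeg \<alpha> \<le> d)"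

definition peval :: "('n::finite) rpoly \<Rightarrow> ('n \<Rightarrow> real) \<Rightarrow> real" where
  "peval P a = (\<Sum>\<alpha>\<in>{\<alpha>. P \<alpha> \<noteq> 0}. P \<alpha> * (\<Prod>i\<in>UNIV. a i ^ \<alpha> i))"

definition pdiff :: "'n \<Rightarrow> ('n::finite) rpoly \<Rightarrow> 'n rpoly" where
  "pdiff i P = (\<lambda>\<alpha>. real (\<alpha> i + 1) * P (\<alpha>(i := \<alpha> i + 1)))"

definition pdiffs :: "'n list \<Rightarrow> ('n::finite) rpoly \<Rightarrow> 'n rpoly" where
  "pdiffs is P = fold pdiff is P"

definition zero_mult_ge :: "('n::finite) rpoly \<Rightarrow> nat \<Rightarrow> ('n \<Rightarrow> real) \<Rightarrow> bool" where
  "zero_mult_ge P k a \<longleftrightarrow> (\<forall>is. length is < k \<longrightarrow> peval (pdiffs is P) a = 0)"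

text \<open>(m,k)-reduced: degree bound, and no monomial divisible by
  x_{i_1}^{m+1} ... x_{i_k}^{m+1} (indices not necessarily distinct).\<close>
definition reduced :: "nat \<Rightarrow> nat \<Rightarrow> ('n::finite) rpoly \<Rightarrow> bool" where
  "reduced m k P \<longleftrightarrow>
     deg_le P (m * CARD('n) + (m + 1) * (k - 1) - 1) \<and>
     (\<forall>\<alpha>. P \<alpha> \<noteq> 0 \<longrightarrow>
        \<not> (\<exists>is::'n list. length is = k \<and> (\<forall>i. (m + 1) * count_list is i \<le> \<alpha> i)))"

definition U :: "nat \<Rightarrow> nat \<Rightarrow> ('n::finite) rpoly set" where
  "U m k = {P. is_poly P \<and> reduced m k P \<and>
     (\<forall>a::'n \<Rightarrow> nat. (\<forall>i. a i \<le> m) \<and> a \<noteq> (\<lambda>_. 0) \<longrightarrow> zero_mult_ge P k (\<lambda>i. real (a i)))}"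

definition pscale :: "real \<Rightarrow> ('n::finite) rpoly \<Rightarrow> 'n rpoly" where
  "pscale r P = (\<lambda>\<alpha>. r * P \<alpha>)"

definition M :: "nat \<Rightarrow> nat \<Rightarrow> nat" where
  "M j n = (n + j - 1) choose n"

end

theory Submission
  imports Defs "HOL-Computational_Algebra.Polynomial" "HOL-Library.Multiset"
begin

text \<open>
  Let F = x (x - 1) \<dots> (x - m) and L_a = F / (x - a) for a node a \<le> m. For exponent vectors q
  with |q| \<le> k - 1 and grid points a \<in> {0..m}^n the products \<Prod>_i F(x_i)^(q_i) L_(a_i)(x_i) are
  linearly independent, and by counting they span the space V of polynomials all of whose
  exponents \<alpha> satisfy \<Sum>_i \<lfloor>\<alpha>_i / (m + 1)\<rfloor> \<le> k - 1, which is exactly the divisibility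
  condition in the definition of reducedness. Inside V the degree bound only excludes the top
  monomials \<Prod>_i x_i^((m + 1) q_i + m) with |q| = k - 1, so U is the common kernel in V of these
  coefficient functionals and of the derivatives of order < k at the nonzero grid points.

  Together with the derivatives of order \<le> k - 2 at the origin these functionals are triangular
  with respect to the basis, because the q-th derivative of F^(q') L_a at a node b vanishes unless
  q' \<le> q, and for q' = q unless a = b. Hence they have trivial common kernel on V, and there are
  exactly dim V of them. So dim U is at least the number of derivatives at the origin, and at most
  that number because these are injective on U: dim U = #{q. |q| \<le> k - 2}.
\<close>

section \<open>Common kernels of linear functionals\<close>

context vector_space
begin

lemma subspace_common_kernel:
  assumes "subspace V"
    and add: "\<And>j x y. j \<in> J \<Longrightarrow> x \<in> V \<Longrightarrow> y \<in> V \<Longrightarrow> \<phi> j (x + y) = \<phi> j x + \<phi> j y"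
    and scale: "\<And>j c x. j \<in> J \<Longrightarrow> x \<in> V \<Longrightarrow> \<phi> j (scale c x) = c * \<phi> j x"
  shows "subspace {x \<in> V. \<forall>j\<in>J. \<phi> j x = 0}"
proof -
  have "\<phi> j 0 = 0" if "j \<in> J" for j
    using scale[OF that subspace_0[OF \<open>subspace V\<close>], of 0] by simp
  then show ?thesis
    using assms by (auto simp: subspace_def)
qed

lemma dim_le_dim_kernel_Suc:
  assumes K: "subspace K" and "K \<subseteq> span W" "finite W"
    and add: "\<And>x y. x \<in> K \<Longrightarrow> y \<in> K \<Longrightarrow> \<phi> (x + y) = \<phi> x + \<phi> y"
    and scale: "\<And>c x. x \<in> K \<Longrightarrow> \<phi> (scale c x) = c * \<phi> x"
  shows "dim K \<le> Suc (dim {x \<in> K. \<phi> x = 0})"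
proof (cases "\<forall>x\<in>K. \<phi> x = 0")
  case True
  then show ?thesis by (simp add: Collect_conj_eq inf_absorb1 subset_iff)
next
  case False
  then obtain v where v: "v \<in> K" "\<phi> v \<noteq> 0" by auto
  obtain B where B: "B \<subseteq> {x \<in> K. \<phi> x = 0}" "independent B" "{x \<in> K. \<phi> x = 0} \<subseteq> span B"
    "card B = dim {x \<in> K. \<phi> x = 0}"
    by (rule basis_exists)
  have "finite B"
    using independent_span_bound[OF \<open>finite W\<close> B(2)] B(1) assms(2) by auto
  have "x \<in> span (insert v B)" if x: "x \<in> K" for x
  proof -
    define y where "y = x - scale (\<phi> x / \<phi> v) v"
    have "y \<in> K"
      unfolding y_def using x v K by (intro subspace_diff subspace_scale) auto
    have "x = y + scale (\<phi> x / \<phi> v) v"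
      by (simp add: y_def)
    then have "\<phi> x = \<phi> y + \<phi> x / \<phi> v * \<phi> v"
      using add[OF \<open>y \<in> K\<close> subspace_scale[OF K v(1)]] scale[OF v(1)] by metis
    then have "\<phi> y = 0"
      using v(2) by simp
    then have y: "y \<in> span (insert v B)"
      using \<open>y \<in> K\<close> B(3) span_mono[of B "insert v B"] by auto
    have "y + scale (\<phi> x / \<phi> v) v \<in> span (insert v B)"
      by (intro span_add[OF y] span_scale span_base) simp
    then show ?thesis by (simp add: y_def)
  qed
  then have "dim K \<le> card (insert v B)"
    using \<open>finite B\<close> by (intro dim_le_card) auto
  also have "\<dots> \<le> Suc (card B)"
    using \<open>finite B\<close> by (simp add: card_insert_if)
  finally show ?thesis using B(4) by simp
qed

lemma dim_le_dim_common_kernel_add_card: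
  assumes "finite J" "subspace V" "V \<subseteq> span W" "finite W"
    and add: "\<And>j x y. j \<in> J \<Longrightarrow> x \<in> V \<Longrightarrow> y \<in> V \<Longrightarrow> \<phi> j (x + y) = \<phi> j x + \<phi> j y"
    and scale: "\<And>j c x. j \<in> J \<Longrightarrow> x \<in> V \<Longrightarrow> \<phi> j (scale c x) = c * \<phi> j x"
  shows "dim V \<le> dim {x \<in> V. \<forall>j\<in>J. \<phi> j x = 0} + card J"
  using \<open>finite J\<close> add scale
proof (induction J rule: finite_induct)
  case empty
  then show ?case by simp
next
  case (insert j J)
  let ?K = "{x \<in> V. \<forall>i\<in>J. \<phi> i x = 0}"
  have "subspace ?K"
    using insert.prems by (intro subspace_common_kernel[OF \<open>subspace V\<close>]) auto
  then have "dim ?K \<le> Suc (dim {x \<in> ?K. \<phi> j x = 0})"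
    using \<open>V \<subseteq> span W\<close> insert.prems by (intro dim_le_dim_kernel_Suc[OF _ _ \<open>finite W\<close>]) auto
  moreover have "{x \<in> ?K. \<phi> j x = 0} = {x \<in> V. \<forall>i\<in>insert j J. \<phi> i x = 0}"
    by auto
  ultimately show ?case
    using insert by simp
qed

lemma span_eq_of_independent_card_ge:
  assumes "independent B" "B \<subseteq> span W" "finite W" "card W \<le> card B"
  shows "span B = span W"
proof -
  obtain C where C: "B \<subseteq> C" "C \<subseteq> span W" "independent C" "span W \<subseteq> span C"
    using maximal_independent_subset_extend[of B "span W"] assms(1,2) by blast
  have "finite C" "card C \<le> card W"
    using independent_span_bound[OF \<open>finite W\<close> C(3,2)] by auto
  then have "B = C"
    using card_seteq[OF _ C(1)] assms(4) by simp
  then show ?thesis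
    using C(4) assms(2) span_minimal[of B "span W"] by auto
qed

end

section \<open>Polynomials as coefficient functions\<close>

type_synonym 'n multiindex = "'n \<Rightarrow> nat"

lemma sum_fun_apply: "(\<Sum>x\<in>A. f x) a = (\<Sum>x\<in>A. f x a)"
  for f :: "'a \<Rightarrow> 'b \<Rightarrow> 'c::comm_monoid_add"
  by (induction A rule: infinite_finite_induct) auto

lemma finite_exps_bounded: "finite {\<alpha> :: 'n::finite multiindex. \<forall>i. \<alpha> i \<le> N i}"
proof -
  have "{\<alpha> :: 'n multiindex. \<forall>i. \<alpha> i \<le> N i} = PiE UNIV (\<lambda>i. {..N i})"
    by (auto simp: PiE_def Pi_def extensional_def)
  then show ?thesis by (simp add: finite_PiE)
qed

lemma peval_eq_sum_superset:
  assumes "finite A" "{\<alpha>. P \<alpha> \<noteq> 0} \<subseteq> A"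
  shows "peval P a = (\<Sum>\<alpha>\<in>A. P \<alpha> * (\<Prod>i\<in>UNIV. a i ^ \<alpha> i))"
  unfolding peval_def by (rule sum.mono_neutral_left) (use assms in auto)

lemma pdiffs_lincomb:
  "pdiffs is (\<lambda>\<alpha>. \<Sum>x\<in>I. c x * f x \<alpha>) = (\<lambda>\<alpha>. \<Sum>x\<in>I. c x * pdiffs is (f x) \<alpha>)"
proof (induction "is" arbitrary: f)
  case Nil
  then show ?case by (simp add: pdiffs_def)
next
  case (Cons j js)
  show ?case
    using Cons[of "\<lambda>x. pdiff j (f x)"]
    by (simp add: pdiffs_def pdiff_def sum_distrib_left mult.left_commute)
qed

lemma peval_lincomb:
  assumes "finite I" "finite A" "\<And>x. x \<in> I \<Longrightarrow> {\<alpha>. f x \<alpha> \<noteq> 0} \<subseteq> A"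
  shows "peval (\<lambda>\<alpha>. \<Sum>x\<in>I. c x * f x \<alpha>) a = (\<Sum>x\<in>I. c x * peval (f x) a)"
proof -
  have "{\<alpha>. (\<Sum>x\<in>I. c x * f x \<alpha>) \<noteq> 0} \<subseteq> A"
  proof
    fix \<alpha> assume "\<alpha> \<in> {\<alpha>. (\<Sum>x\<in>I. c x * f x \<alpha>) \<noteq> 0}"
    then obtain x where "x \<in> I" "f x \<alpha> \<noteq> 0"
      by (auto elim: sum.not_neutral_contains_not_neutral)
    then show "\<alpha> \<in> A" using assms(3) by auto
  qed
  then have "peval (\<lambda>\<alpha>. \<Sum>x\<in>I. c x * f x \<alpha>) a
      = (\<Sum>\<alpha>\<in>A. (\<Sum>x\<in>I. c x * f x \<alpha>) * (\<Prod>i\<in>UNIV. a i ^ \<alpha> i))"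
    by (rule peval_eq_sum_superset[OF assms(2)])
  also have "\<dots> = (\<Sum>x\<in>I. c x * (\<Sum>\<alpha>\<in>A. f x \<alpha> * (\<Prod>i\<in>UNIV. a i ^ \<alpha> i)))"
    by (simp add: sum_distrib_right sum_distrib_left mult.assoc) (rule sum.swap)
  also have "\<dots> = (\<Sum>x\<in>I. c x * peval (f x) a)"
    using assms by (simp add: peval_eq_sum_superset)
  finally show ?thesis .
qed

lemma pdiffs_zero: "pdiffs is (\<lambda>_. 0) = (\<lambda>_. 0)"
  by (induction "is") (simp_all add: pdiffs_def pdiff_def)

lemma peval_zero: "peval (\<lambda>_. 0) a = 0"
  by (simp add: peval_def)

lemma mod_Suc_le: "(a::nat) mod (m + 1) \<le> m"
  using mod_less_divisor[of "m + 1" a] by linarith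

lemma length_eq_sum_count_list: "length (xs :: 'n::finite list) = sum (count_list xs) UNIV"
  by (simp add: sum_count_set)

definition list_of_counts :: "'n::finite multiindex \<Rightarrow> 'n list" where
  "list_of_counts \<beta> = (SOME xs. count_list xs = \<beta>)"

lemma count_list_list_of_counts: "count_list (list_of_counts \<beta>) = \<beta>"
proof -
  obtain xs where "mset xs = Abs_multiset \<beta>"
    using ex_mset by blast
  then have "count_list xs = \<beta>"
    by (metis count_mset count_Abs_multiset finite ext)
  then show ?thesis
    unfolding list_of_counts_def by (rule someI)
qed

definition poly_tensor :: "('n::finite \<Rightarrow> real poly) \<Rightarrow> 'n rpoly" where
  "poly_tensor h = (\<lambda>\<alpha>. \<Prod>i\<in>UNIV. coeff (h i) (\<alpha> i))"

lemma poly_tensor_nonzero_imp_le_degree: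
  "poly_tensor h \<alpha> \<noteq> 0 \<Longrightarrow> \<alpha> i \<le> degree (h i)"
  by (rule le_degree) (simp add: poly_tensor_def)

lemma poly_tensor_support_subset:
  "(\<And>i. degree (h i) \<le> N i) \<Longrightarrow> {\<alpha>. poly_tensor h \<alpha> \<noteq> 0} \<subseteq> {\<alpha>. \<forall>i. \<alpha> i \<le> N i}"
  using poly_tensor_nonzero_imp_le_degree by (fastforce intro: order_trans)

lemma peval_poly_tensor: "peval (poly_tensor h) a = (\<Prod>i\<in>UNIV. poly (h i) (a i))"
proof -
  let ?N = "\<lambda>i. degree (h i)"
  have "peval (poly_tensor h) a
      = (\<Sum>\<alpha>\<in>{\<alpha>. \<forall>i. \<alpha> i \<le> ?N i}. poly_tensor h \<alpha> * (\<Prod>i\<in>UNIV. a i ^ \<alpha> i))"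
    by (intro peval_eq_sum_superset finite_exps_bounded poly_tensor_support_subset) simp
  also have "\<dots> = (\<Sum>\<alpha>\<in>PiE UNIV (\<lambda>i. {..?N i}). \<Prod>i\<in>UNIV. coeff (h i) (\<alpha> i) * a i ^ \<alpha> i)"
    by (intro sum.cong) (auto simp: poly_tensor_def prod.distrib PiE_def Pi_def extensional_def)
  also have "\<dots> = (\<Prod>i\<in>UNIV. \<Sum>d\<le>?N i. coeff (h i) d * a i ^ d)"
    by (rule prod_sum_PiE[symmetric]) auto
  also have "\<dots> = (\<Prod>i\<in>UNIV. poly (h i) (a i))"
    by (simp add: poly_altdef)
  finally show ?thesis .
qed

lemma pdiff_poly_tensor:
  fixes h :: "'n::finite \<Rightarrow> real poly"
  shows "pdiff j (poly_tensor h) = poly_tensor (h(j := pderiv (h j)))"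
proof
  fix \<alpha> :: "'n multiindex"
  have "pdiff j (poly_tensor h) \<alpha>
      = real (\<alpha> j + 1) * coeff (h j) (\<alpha> j + 1) * (\<Prod>i\<in>UNIV-{j}. coeff (h i) (\<alpha> i))"
    unfolding pdiff_def poly_tensor_def
    by (subst prod.remove[of _ j]) (auto intro!: prod.cong)
  also have "\<dots> = poly_tensor (h(j := pderiv (h j))) \<alpha>"
    unfolding poly_tensor_def by (subst prod.remove[of _ j]) (auto simp: coeff_pderiv)
  finally show "pdiff j (poly_tensor h) \<alpha> = poly_tensor (h(j := pderiv (h j))) \<alpha>" .
qed

lemma pdiffs_poly_tensor:
  "pdiffs is (poly_tensor h) = poly_tensor (\<lambda>i. (pderiv ^^ count_list is i) (h i))"
proof (induction "is" arbitrary: h)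
  case Nil
  then show ?case by (simp add: pdiffs_def)
next
  case (Cons j js)
  have "pdiffs (j # js) (poly_tensor h) = pdiffs js (poly_tensor (h(j := pderiv (h j))))"
    by (simp add: pdiffs_def pdiff_poly_tensor)
  also have "\<dots> = poly_tensor (\<lambda>i. (pderiv ^^ count_list (j # js) i) (h i))"
    unfolding Cons
    by (rule arg_cong[where f = poly_tensor]) (auto simp: fun_eq_iff funpow_Suc_right funpow_swap1)
  finally show ?case .
qed

section \<open>Univariate Hermite-type polynomials\<close>

lemma pderiv_linear_power_mult:
  fixes b :: "'a::{idom,semiring_char_0}"
  shows "pderiv ([:-b, 1:] ^ Suc j * h) = [:-b, 1:] ^ j * (smult (of_nat (Suc j)) h + [:-b, 1:] * pderiv h)"
proof -
  have "pderiv [:-b, 1:] = 1"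
    by (simp add: pderiv_pCons)
  then have "pderiv ([:-b, 1:] ^ Suc j * h)
      = [:-b, 1:] ^ Suc j * pderiv h + h * (smult (of_nat (Suc j)) ([:-b, 1:] ^ j) * 1)"
    by (simp only: pderiv_mult pderiv_power_Suc)
  then show ?thesis
    by (simp add: algebra_simps)
qed

lemma poly_higher_pderiv_linear_power_mult:
  fixes b :: "'a::{idom,semiring_char_0}"
  shows "poly ((pderiv ^^ j) ([:-b, 1:] ^ j * h)) b = fact j * poly h b"
proof (induction j arbitrary: h)
  case (Suc j)
  show ?case
    by (simp only: funpow_Suc_right o_apply pderiv_linear_power_mult Suc) (simp add: algebra_simps)
qed simp

lemma poly_higher_pderiv_linear_power_mult_eq_0:
  fixes b :: "'a::{idom,semiring_char_0}"
  shows "s < j \<Longrightarrow> poly ((pderiv ^^ s) ([:-b, 1:] ^ j * h)) b = 0"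
proof (induction s arbitrary: j h)
  case (Suc s)
  then obtain j' where "j = Suc j'" "s < j'"
    by (cases j) auto
  then show ?case
    by (simp only: funpow_Suc_right o_apply pderiv_linear_power_mult Suc.IH)
qed simp

definition node_poly :: "nat \<Rightarrow> real poly" where
  "node_poly m = (\<Prod>j\<le>m. [:- real j, 1:])"

definition node_poly_except :: "nat \<Rightarrow> nat \<Rightarrow> real poly" where
  "node_poly_except m a = (\<Prod>j\<in>{..m} - {a}. [:- real j, 1:])"

definition hermite_poly :: "nat \<Rightarrow> nat \<Rightarrow> nat \<Rightarrow> real poly" where
  "hermite_poly m s a = node_poly m ^ s * node_poly_except m a"

lemma node_poly_split: "a \<le> m \<Longrightarrow> node_poly m = [:- real a, 1:] * node_poly_except m a"
  unfolding node_poly_def node_poly_except_def by (subst prod.remove[of _ a]) auto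

lemma poly_node_poly_except_eq_0_iff:
  "b \<le> m \<Longrightarrow> poly (node_poly_except m a) (real b) = 0 \<longleftrightarrow> a \<noteq> b"
  unfolding node_poly_except_def poly_prod by (subst prod_zero_iff) auto

lemma monic_degree_node_poly_except:
  assumes "a \<le> m"
  shows "lead_coeff (node_poly_except m a) = 1" "degree (node_poly_except m a) = m"
proof -
  show "lead_coeff (node_poly_except m a) = 1"
    unfolding node_poly_except_def lead_coeff_prod by simp
  have "degree (node_poly_except m a) = card ({..m} - {a})"
    unfolding node_poly_except_def by (subst degree_prod_eq_sum_degree) auto
  then show "degree (node_poly_except m a) = m"
    using assms by simp
qed

lemma monic_degree_node_poly: "lead_coeff (node_poly m) = 1" "degree (node_poly m) = m + 1"
  unfolding node_poly_def lead_coeff_prod by (simp_all add: degree_prod_eq_sum_degree)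

lemma monic_degree_hermite_poly:
  assumes "a \<le> m"
  shows "lead_coeff (hermite_poly m s a) = 1" "degree (hermite_poly m s a) = (m + 1) * s + m"
proof -
  have "node_poly m \<noteq> 0" "node_poly_except m a \<noteq> 0"
    using monic_degree_node_poly(1)[of m] monic_degree_node_poly_except(1)[OF assms] by auto
  then show "degree (hermite_poly m s a) = (m + 1) * s + m"
    using monic_degree_node_poly monic_degree_node_poly_except[OF assms]
    by (simp add: hermite_poly_def degree_mult_eq degree_power_eq)
  show "lead_coeff (hermite_poly m s a) = 1"
    by (simp only: hermite_poly_def lead_coeff_mult lead_coeff_power monic_degree_node_poly(1)
        monic_degree_node_poly_except(1)[OF assms]) simp
qed

lemma hermite_poly_factor:
  "b \<le> m \<Longrightarrow> hermite_poly m s a = [:- real b, 1:] ^ s * (node_poly_except m b ^ s * node_poly_except m a)"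
  by (simp only: hermite_poly_def node_poly_split power_mult_distrib mult.assoc)

lemma poly_higher_pderiv_hermite_poly_eq_0:
  "b \<le> m \<Longrightarrow> t < s \<Longrightarrow> poly ((pderiv ^^ t) (hermite_poly m s a)) (real b) = 0"
  by (simp add: hermite_poly_factor poly_higher_pderiv_linear_power_mult_eq_0)

lemma poly_higher_pderiv_hermite_poly_eq_0_iff:
  "b \<le> m \<Longrightarrow> poly ((pderiv ^^ s) (hermite_poly m s a)) (real b) = 0 \<longleftrightarrow> a \<noteq> b"
  by (simp add: hermite_poly_factor poly_higher_pderiv_linear_power_mult
      poly_node_poly_except_eq_0_iff)

definition grid :: "nat \<Rightarrow> 'n::finite multiindex set" where
  "grid m = {a. \<forall>i. a i \<le> m}"

definition exps_deg_le :: "nat \<Rightarrow> 'n::finite multiindex set" where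
  "exps_deg_le d = {q. sum q UNIV \<le> d}"

lemma finite_grid: "finite (grid m)"
  unfolding grid_def by (rule finite_exps_bounded)

lemma le_sum_exps: "(q :: 'n::finite multiindex) i \<le> sum q UNIV"
  by (rule member_le_sum) auto

lemma finite_exps_deg_le: "finite (exps_deg_le d)"
  unfolding exps_deg_le_def
  by (rule finite_subset[OF _ finite_exps_bounded[of "\<lambda>_. d"]]) (auto intro: le_trans[OF le_sum_exps])

lemma exps_deg_le_mono: "d \<le> d' \<Longrightarrow> exps_deg_le d \<subseteq> exps_deg_le d'"
  by (auto simp: exps_deg_le_def)

lemma card_exps_deg_eq: "card {q :: 'n::finite multiindex. sum q UNIV = j} = (CARD('n) + j - 1) choose j"
proof -
  have size_eq: "size X = sum (count X) UNIV" for X :: "'n multiset"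
    unfolding size_multiset_overloaded_eq by (rule sum.mono_neutral_left) (auto simp: not_in_iff)
  have "{q :: 'n multiindex. sum q UNIV = j} \<subseteq> count ` multisets_of_size UNIV j"
  proof
    fix q :: "'n multiindex"
    assume "q \<in> {q. sum q UNIV = j}"
    then have "Abs_multiset q \<in> multisets_of_size UNIV j" "q = count (Abs_multiset q)"
      by (simp_all add: multisets_of_size_def size_eq)
    then show "q \<in> count ` multisets_of_size UNIV j"
      by blast
  qed
  then have "count ` multisets_of_size UNIV j = {q :: 'n multiindex. sum q UNIV = j}"
    by (auto simp: multisets_of_size_def size_eq)
  moreover have "inj count"
    by (rule injI) (simp add: multiset_eqI)
  ultimately have "card {q :: 'n multiindex. sum q UNIV = j} = card (multisets_of_size (UNIV :: 'n set) j)"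
    using card_image[OF inj_on_subset[OF _ subset_UNIV]] by metis
  then show ?thesis
    by (simp add: card_multisets_of_size)
qed

lemma card_exps_deg_le: "card (exps_deg_le d :: 'n::finite multiindex set) = (CARD('n) + d) choose CARD('n)"
proof -
  have "CARD('n) > 0"
    by simp
  then obtain n where n: "CARD('n) = Suc n"
    using gr0_implies_Suc by blast
  have finite_layer: "finite {q :: 'n multiindex. sum q UNIV = j}" for j
    by (rule finite_subset[OF _ finite_exps_deg_le[of j]]) (auto simp: exps_deg_le_def)
  have layers: "exps_deg_le d = (\<Union>j\<le>d. {q :: 'n multiindex. sum q UNIV = j})"
    by (auto simp: exps_deg_le_def)
  have "card (exps_deg_le d :: 'n multiindex set) = (\<Sum>j\<le>d. card {q :: 'n multiindex. sum q UNIV = j})"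
    unfolding layers by (subst card_UN_disjoint) (auto simp: finite_layer)
  also have "\<dots> = (\<Sum>j\<le>d. (n + j) choose n)"
  proof (intro sum.cong refl)
    fix j
    have "(n + j) choose j = (n + j) choose n"
      using binomial_symmetric[of j "n + j"] by simp
    then show "card {q :: 'n multiindex. sum q UNIV = j} = (n + j) choose n"
      by (simp add: card_exps_deg_eq n)
  qed
  also have "\<dots> = (CARD('n) + d) choose CARD('n)"
    by (simp add: choose_rising_sum(1) n)
  finally show ?thesis .
qed

section \<open>The tensor basis and its jets\<close>

type_synonym 'n basis_index = "'n multiindex \<times> 'n multiindex"

definition hermite_index :: "nat \<Rightarrow> nat \<Rightarrow> 'n::finite basis_index set" where
  "hermite_index m k = exps_deg_le (k - 1) \<times> grid m"

lemma finite_hermite_index: "finite (hermite_index m k)"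
  by (simp add: hermite_index_def finite_exps_deg_le finite_grid)

definition hermite_basis :: "nat \<Rightarrow> 'n::finite basis_index \<Rightarrow> 'n rpoly" where
  "hermite_basis m = (\<lambda>(q, a). poly_tensor (\<lambda>i. hermite_poly m (q i) (a i)))"

definition hermite_comb :: "nat \<Rightarrow> nat \<Rightarrow> ('n::finite basis_index \<Rightarrow> real) \<Rightarrow> 'n rpoly" where
  "hermite_comb m k c = (\<lambda>\<alpha>. \<Sum>x\<in>hermite_index m k. c x * hermite_basis m x \<alpha>)"

definition hermite_jet :: "nat \<Rightarrow> 'n::finite basis_index \<Rightarrow> 'n multiindex \<Rightarrow> 'n multiindex \<Rightarrow> real" where
  "hermite_jet m = (\<lambda>(q, a) b \<beta>. \<Prod>i\<in>UNIV. poly ((pderiv ^^ \<beta> i) (hermite_poly m (q i) (a i))) (real (b i)))"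

lemma pdiffs_hermite_basis_support:
  assumes "x \<in> hermite_index m k"
  shows "{\<alpha>. pdiffs is (hermite_basis m x) \<alpha> \<noteq> 0} \<subseteq> {\<alpha>. \<forall>i. \<alpha> i \<le> (m + 1) * (k - 1) + m}"
proof -
  obtain q a where x: "x = (q, a)" "q \<in> exps_deg_le (k - 1)" "a \<in> grid m"
    using assms unfolding hermite_index_def by auto
  have "degree (hermite_poly m (q i) (a i)) \<le> (m + 1) * (k - 1) + m" for i
  proof -
    have "q i \<le> k - 1" "a i \<le> m"
      using x le_sum_exps[of q i] by (simp_all add: exps_deg_le_def grid_def)
    then show ?thesis
      using mult_le_mono2[of "q i" "k - 1" "m + 1"] by (simp add: monic_degree_hermite_poly)
  qed
  then show ?thesis
    unfolding x hermite_basis_def prod.case pdiffs_poly_tensor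
    by (intro poly_tensor_support_subset) (force simp: degree_higher_pderiv intro: le_trans[OF diff_le_self])
qed

lemma peval_pdiffs_hermite_comb:
  "peval (pdiffs is (hermite_comb m k c)) (\<lambda>i. real (b i))
     = (\<Sum>x\<in>hermite_index m k. c x * hermite_jet m x b (count_list is))"
proof -
  have "peval (pdiffs is (hermite_comb m k c)) (\<lambda>i. real (b i))
      = (\<Sum>x\<in>hermite_index m k. c x * peval (pdiffs is (hermite_basis m x)) (\<lambda>i. real (b i)))"
    unfolding hermite_comb_def pdiffs_lincomb
    by (rule peval_lincomb[OF finite_hermite_index finite_exps_bounded pdiffs_hermite_basis_support])
  also have "\<dots> = (\<Sum>x\<in>hermite_index m k. c x * hermite_jet m x b (count_list is))"
    by (intro sum.cong refl)
      (auto simp: hermite_basis_def hermite_jet_def pdiffs_poly_tensor peval_poly_tensor)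
  finally show ?thesis .
qed

lemma hermite_jet_nonzero:
  assumes jet: "hermite_jet m (q', a) b q \<noteq> 0" and b: "b \<in> grid m"
  shows "(q', a) = (q, b) \<or> sum q' UNIV < sum q UNIV"
proof -
  have factor: "poly ((pderiv ^^ q i) (hermite_poly m (q' i) (a i))) (real (b i)) \<noteq> 0" for i
    using jet by (auto simp: hermite_jet_def)
  have b_le: "b i \<le> m" for i
    using b by (simp add: grid_def)
  have le: "q' i \<le> q i" for i
    using factor[of i] poly_higher_pderiv_hermite_poly_eq_0[OF b_le] not_le by blast
  show ?thesis
  proof (cases "q' = q")
    case True
    then have "a i = b i" for i
      using factor[of i] poly_higher_pderiv_hermite_poly_eq_0_iff[OF b_le] by auto
    then show ?thesis using True by auto
  next
    case False
    then obtain i where "q' i < q i"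
      using le by (metis ext le_neq_implies_less)
    then have "sum q' UNIV < sum q UNIV"
      using le by (intro sum_strict_mono_ex1) auto
    then show ?thesis ..
  qed
qed

lemma hermite_jet_self_nonzero: "b \<in> grid m \<Longrightarrow> hermite_jet m (q, b) b q \<noteq> 0"
  by (auto simp: hermite_jet_def grid_def poly_higher_pderiv_hermite_poly_eq_0_iff)

lemma hermite_comb_jet_triangular:
  assumes "(q, b) \<in> hermite_index m k"
    and lower: "\<And>x. x \<in> hermite_index m k \<Longrightarrow> sum (fst x) UNIV < sum q UNIV \<Longrightarrow> c x = 0"
  shows "(\<Sum>x\<in>hermite_index m k. c x * hermite_jet m x b q) = c (q, b) * hermite_jet m (q, b) b q"
proof -
  have b: "b \<in> grid m"
    using assms(1) by (simp add: hermite_index_def)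
  have "c x * hermite_jet m x b q = 0" if "x \<in> hermite_index m k - {(q, b)}" for x
  proof (cases x)
    case (Pair q' a)
    then show ?thesis
      using that lower hermite_jet_nonzero[OF _ b, of q' a q] by force
  qed
  then show ?thesis
    by (simp add: sum.remove[OF finite_hermite_index assms(1)] sum.neutral)
qed

definition top_exp :: "nat \<Rightarrow> 'n::finite multiindex \<Rightarrow> 'n multiindex" where
  "top_exp m q = (\<lambda>i. (m + 1) * q i + m)"

lemma hermite_basis_top_exp:
  assumes "q' \<in> exps_deg_le d" "sum q UNIV = d" "a \<in> grid m"
  shows "hermite_basis m (q', a) (top_exp m q) = (if q' = q then 1 else 0)"
proof -
  have "a i \<le> m" for i
    using assms(3) by (simp add: grid_def)
  note deg = monic_degree_hermite_poly[OF this]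
  show ?thesis
  proof (cases "q' = q")
    case True
    then show ?thesis
      using deg by (simp add: hermite_basis_def poly_tensor_def top_exp_def)
  next
    case False
    have "\<exists>i. q' i < q i"
    proof (rule ccontr)
      assume "\<nexists>i. q' i < q i"
      then have le: "q i \<le> q' i" for i
        by (simp add: not_less)
      obtain j where "q' j \<noteq> q j"
        using False by blast
      then have "q j < q' j"
        using le[of j] by simp
      then have "sum q UNIV < sum q' UNIV"
        using le by (intro sum_strict_mono_ex1) auto
      then show False
        using assms(1,2) by (simp add: exps_deg_le_def)
    qed
    then obtain i where i: "q' i < q i" by blast
    have "coeff (hermite_poly m (q' i) (a i)) (top_exp m q i) = 0"
      using i mult_less_mono2[OF i, of "m + 1"] by (intro coeff_eq_0) (simp add: deg top_exp_def)
    then show ?thesis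
      using False by (auto simp: hermite_basis_def poly_tensor_def intro!: prod_zero)
  qed
qed

lemma hermite_comb_top_exp:
  assumes "sum q UNIV = k - 1"
  shows "hermite_comb m k c (top_exp m q) = (\<Sum>a\<in>grid m. c (q, a))"
proof -
  have q: "q \<in> exps_deg_le (k - 1)"
    using assms by (simp add: exps_deg_le_def)
  have "hermite_comb m k c (top_exp m q)
      = (\<Sum>q'\<in>exps_deg_le (k - 1). \<Sum>a\<in>grid m. c (q', a) * hermite_basis m (q', a) (top_exp m q))"
    unfolding hermite_comb_def hermite_index_def
    by (simp add: sum.cartesian_product case_prod_unfold)
  also have "\<dots> = (\<Sum>q'\<in>exps_deg_le (k - 1). if q' = q then \<Sum>a\<in>grid m. c (q, a) else 0)"
    using assms by (intro sum.cong refl) (auto simp: hermite_basis_top_exp)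
  also have "\<dots> = (\<Sum>a\<in>grid m. c (q, a))"
    using q by (simp add: finite_exps_deg_le)
  finally show ?thesis .
qed

text \<open>
  Once all coefficients of lower total order vanish, the q-th jet at b isolates c (q, b). At the
  corner b = 0, |q| = k - 1, where no jet condition is imposed, the top coefficient
  \<Sum>_a c (q, a) takes its place.
\<close>
lemma hermite_coeff_eq_0_if_lower_eq_0:
  fixes c :: "'n::finite basis_index \<Rightarrow> real"
  assumes jets: "\<And>q b. q \<in> exps_deg_le (k - 1) \<Longrightarrow> b \<in> grid m \<Longrightarrow> b \<noteq> (\<lambda>_. 0) \<or> sum q UNIV < k - 1 \<Longrightarrow>
      (\<Sum>x\<in>hermite_index m k. c x * hermite_jet m x b q) = 0"
    and tops: "\<And>q. sum q UNIV = k - 1 \<Longrightarrow> (\<Sum>a\<in>grid m. c (q, a)) = 0"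
    and qb: "(q, b) \<in> hermite_index m k"
    and lower: "\<And>y. y \<in> hermite_index m k \<Longrightarrow> sum (fst y) UNIV < sum q UNIV \<Longrightarrow> c y = 0"
  shows "c (q, b) = 0"
proof -
  have off_corner: "c (q, a) = 0" if "a \<in> grid m" "a \<noteq> (\<lambda>_. 0) \<or> sum q UNIV < k - 1" for a
  proof -
    have qa: "(q, a) \<in> hermite_index m k"
      using qb that(1) by (simp add: hermite_index_def)
    have "c (q, a) * hermite_jet m (q, a) a q = 0"
      using jets[of q a] that qa hermite_comb_jet_triangular[OF qa lower]
      by (simp add: hermite_index_def)
    then show ?thesis
      using hermite_jet_self_nonzero[OF that(1)] by simp
  qed
  show "c (q, b) = 0"
  proof (cases "b \<noteq> (\<lambda>_. 0) \<or> sum q UNIV < k - 1")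
    case True
    then show ?thesis
      using off_corner qb by (simp add: hermite_index_def)
  next
    case False
    then have "b = (\<lambda>_. 0)" "sum q UNIV = k - 1"
      using qb by (auto simp: hermite_index_def exps_deg_le_def)
    moreover have "b \<in> grid m"
      using qb by (simp add: hermite_index_def)
    ultimately have "c (q, b) = (\<Sum>a\<in>grid m. c (q, a))"
      using off_corner by (simp add: sum.remove[OF finite_grid] sum.neutral)
    then show ?thesis
      using tops \<open>sum q UNIV = k - 1\<close> by simp
  qed
qed

lemma hermite_coeffs_eq_0:
  fixes c :: "'n::finite basis_index \<Rightarrow> real"
  assumes jets: "\<And>q b. q \<in> exps_deg_le (k - 1) \<Longrightarrow> b \<in> grid m \<Longrightarrow> b \<noteq> (\<lambda>_. 0) \<or> sum q UNIV < k - 1 \<Longrightarrow>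
      (\<Sum>x\<in>hermite_index m k. c x * hermite_jet m x b q) = 0"
    and tops: "\<And>q. sum q UNIV = k - 1 \<Longrightarrow> (\<Sum>a\<in>grid m. c (q, a)) = 0"
    and "x \<in> hermite_index m k"
  shows "c x = 0"
  using \<open>x \<in> hermite_index m k\<close>
proof (induction "sum (fst x) UNIV" arbitrary: x rule: less_induct)
  case less
  obtain q b where "x = (q, b)"
    by fastforce
  then show ?case
    using less by (auto intro: hermite_coeff_eq_0_if_lower_eq_0[OF jets tops])
qed

lemma hermite_comb_eq_0_imp_coeffs_eq_0:
  fixes c :: "'n::finite basis_index \<Rightarrow> real"
  assumes "hermite_comb m k c = (\<lambda>_. 0)" "x \<in> hermite_index m k"
  shows "c x = 0"
proof (rule hermite_coeffs_eq_0[OF _ _ assms(2)])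
  fix q b :: "'n multiindex"
  show "(\<Sum>x\<in>hermite_index m k. c x * hermite_jet m x b q) = 0"
    using peval_pdiffs_hermite_comb[of "list_of_counts q" m k c b] assms(1)
    by (simp add: count_list_list_of_counts pdiffs_zero peval_zero)
next
  fix q :: "'n multiindex"
  assume "sum q UNIV = k - 1"
  then show "(\<Sum>a\<in>grid m. c (q, a)) = 0"
    using hermite_comb_top_exp[of q k m c] assms(1) by simp
qed

section \<open>The span of the tensor basis\<close>

interpretation ps: vector_space "pscale :: real \<Rightarrow> ('n::finite) rpoly \<Rightarrow> 'n rpoly"
  by unfold_locales (simp_all add: pscale_def fun_eq_iff algebra_simps)

lemma hermite_comb_eq_sum:
  "hermite_comb m k c = (\<Sum>x\<in>hermite_index m k. pscale (c x) (hermite_basis m x))"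
  by (simp add: hermite_comb_def fun_eq_iff sum_fun_apply pscale_def)

lemma inj_on_hermite_basis: "inj_on (hermite_basis m) (hermite_index m k)"
proof
  fix x y assume x: "x \<in> hermite_index m k" and y: "y \<in> hermite_index m k"
    and eq: "hermite_basis m x = hermite_basis m y"
  define c where "c z = (if z = x then 1 else if z = y then -1 else 0 :: real)" for z
  show "x = y"
  proof (rule ccontr)
    assume "x \<noteq> y"
    then have "c z * hermite_basis m z \<alpha>
        = (if z = x then hermite_basis m x \<alpha> else 0) - (if z = y then hermite_basis m y \<alpha> else 0)" for z \<alpha>
      by (simp add: c_def)
    then have "hermite_comb m k c = hermite_basis m x - hermite_basis m y"
      using x y by (simp add: hermite_comb_def sum_subtractf finite_hermite_index fun_eq_iff)
    then have "c x = 0"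
      using eq hermite_comb_eq_0_imp_coeffs_eq_0[OF _ x] by (simp add: fun_eq_iff)
    then show False
      by (simp add: c_def)
  qed
qed

lemma sum_hermite_basis_image:
  "(\<Sum>v\<in>hermite_basis m ` hermite_index m k. pscale (u v) v) = hermite_comb m k (\<lambda>x. u (hermite_basis m x))"
  by (simp add: hermite_comb_eq_sum sum.reindex[OF inj_on_hermite_basis])

lemma independent_hermite_basis: "ps.independent (hermite_basis m ` hermite_index m k :: 'n::finite rpoly set)"
proof (rule ps.independent_if_scalars_zero)
  fix u :: "'n rpoly \<Rightarrow> real" and v :: "'n rpoly"
  assume "(\<Sum>v\<in>hermite_basis m ` hermite_index m k. pscale (u v) v) = 0"
    and "v \<in> hermite_basis m ` hermite_index m k"
  then show "u v = 0"
    using hermite_comb_eq_0_imp_coeffs_eq_0[of m k "\<lambda>x. u (hermite_basis m x)"]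
    by (auto simp: sum_hermite_basis_image zero_fun_def)
qed (simp add: finite_hermite_index)

lemma span_hermite_basis: "ps.span (hermite_basis m ` hermite_index m k) = range (hermite_comb m k)"
proof -
  have "ps.span (hermite_basis m ` hermite_index m k)
      = range (\<lambda>u. \<Sum>v\<in>hermite_basis m ` hermite_index m k. pscale (u v) v)"
    by (simp add: ps.span_finite finite_hermite_index)
  moreover have "hermite_comb m k c \<in> ps.span (hermite_basis m ` hermite_index m k)" for c
    unfolding hermite_comb_eq_sum by (intro ps.span_sum ps.span_scale ps.span_base) auto
  ultimately show ?thesis
    by (auto simp: sum_hermite_basis_image)
qed

lemma dim_range_hermite_comb:
  "ps.dim (range (hermite_comb m k) :: 'n::finite rpoly set) = card (hermite_index m k :: 'n basis_index set)"
proof -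
  have "ps.dim (range (hermite_comb m k) :: 'n rpoly set) = card (hermite_basis m ` hermite_index m k :: 'n rpoly set)"
    unfolding span_hermite_basis[symmetric] by (rule ps.dim_span_eq_card_independent[OF independent_hermite_basis])
  also have "\<dots> = card (hermite_index m k :: 'n basis_index set)"
    by (rule card_image[OF inj_on_hermite_basis])
  finally show ?thesis .
qed

definition reduced_exps :: "nat \<Rightarrow> nat \<Rightarrow> 'n::finite multiindex set" where
  "reduced_exps m k = {\<alpha>. (\<Sum>i\<in>UNIV. \<alpha> i div (m + 1)) \<le> k - 1}"

lemma finite_reduced_exps: "finite (reduced_exps m k :: 'n::finite multiindex set)"
proof -
  have "\<alpha> i \<le> (m + 1) * k + m" if "\<alpha> \<in> reduced_exps m k" for \<alpha> :: "'n multiindex" and i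
  proof -
    have "\<alpha> i div (m + 1) \<le> k"
      using that le_sum_exps[of "\<lambda>i. \<alpha> i div (m + 1)" i] by (simp add: reduced_exps_def)
    then have "(m + 1) * (\<alpha> i div (m + 1)) \<le> (m + 1) * k"
      by (rule mult_le_mono2)
    then have "(m + 1) * (\<alpha> i div (m + 1)) + \<alpha> i mod (m + 1) \<le> (m + 1) * k + m"
      using mod_Suc_le[of "\<alpha> i" m] by (rule add_le_mono)
    then show ?thesis
      by (simp only: mult_div_mod_eq)
  qed
  then show ?thesis
    by (auto intro: finite_subset[OF _ finite_exps_bounded[of "\<lambda>_. (m + 1) * k + m"]])
qed

lemma card_reduced_exps_le:
  "card (reduced_exps m k :: 'n::finite multiindex set) \<le> card (hermite_index m k :: 'n basis_index set)"
proof -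
  define f where "f \<alpha> = (\<lambda>i. \<alpha> i div (m + 1), \<lambda>i. \<alpha> i mod (m + 1))" for \<alpha> :: "'n multiindex"
  have "inj f"
  proof
    fix \<alpha> \<beta> assume "f \<alpha> = f \<beta>"
    then have "\<alpha> i div (m + 1) = \<beta> i div (m + 1)" "\<alpha> i mod (m + 1) = \<beta> i mod (m + 1)" for i
      by (simp_all add: f_def fun_eq_iff)
    then show "\<alpha> = \<beta>"
      by (metis div_mult_mod_eq ext)
  qed
  moreover have "f ` reduced_exps m k \<subseteq> hermite_index m k"
    by (auto simp: f_def hermite_index_def exps_deg_le_def reduced_exps_def grid_def mod_Suc_le)
  ultimately show ?thesis
    by (intro card_inj_on_le[OF _ _ finite_hermite_index]) (auto intro: inj_on_subset)
qed

lemma hermite_basis_support_reduced: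
  assumes "x \<in> hermite_index m k" "hermite_basis m x \<alpha> \<noteq> 0"
  shows "\<alpha> \<in> reduced_exps m k"
proof -
  obtain q a where x: "x = (q, a)" "q \<in> exps_deg_le (k - 1)" "a \<in> grid m"
    using assms(1) unfolding hermite_index_def by auto
  have "\<alpha> i div (m + 1) \<le> q i" for i
  proof -
    have "a i \<le> m"
      using x(3) by (simp add: grid_def)
    then have "\<alpha> i \<le> (m + 1) * q i + m"
      using poly_tensor_nonzero_imp_le_degree[of "\<lambda>i. hermite_poly m (q i) (a i)" \<alpha> i] assms(2)
      by (simp add: x(1) hermite_basis_def monic_degree_hermite_poly)
    then have "\<alpha> i < (q i + 1) * (m + 1)"
      by (simp add: algebra_simps)
    then have "\<alpha> i div (m + 1) < q i + 1"
      by (rule less_mult_imp_div_less)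
    then show ?thesis
      by simp
  qed
  then have "(\<Sum>i\<in>UNIV. \<alpha> i div (m + 1)) \<le> sum q UNIV"
    by (intro sum_mono) auto
  then show ?thesis
    using x(2) by (simp add: reduced_exps_def exps_deg_le_def)
qed

lemma hermite_comb_support_reduced:
  assumes "hermite_comb m k c \<alpha> \<noteq> 0"
  shows "\<alpha> \<in> reduced_exps m k"
proof -
  obtain x where "x \<in> hermite_index m k" "c x * hermite_basis m x \<alpha> \<noteq> 0"
    using assms unfolding hermite_comb_def by (rule sum.not_neutral_contains_not_neutral)
  then show ?thesis
    by (intro hermite_basis_support_reduced) auto
qed

definition monomial :: "'n::finite multiindex \<Rightarrow> 'n rpoly" where
  "monomial \<alpha> = (\<lambda>\<beta>. if \<beta> = \<alpha> then 1 else 0)"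

lemma in_span_monomials:
  assumes "finite A" "{\<alpha>. P \<alpha> \<noteq> 0} \<subseteq> A"
  shows "P \<in> ps.span (monomial ` A)"
proof -
  have "(\<Sum>\<alpha>\<in>A. pscale (P \<alpha>) (monomial \<alpha>)) \<beta> = (if \<beta> \<in> A then P \<beta> else 0)" for \<beta>
    by (simp add: sum_fun_apply pscale_def monomial_def if_distrib sum.delta'[OF assms(1)] cong: if_cong)
  then have "P = (\<Sum>\<alpha>\<in>A. pscale (P \<alpha>) (monomial \<alpha>))"
    using assms(2) by (auto simp: fun_eq_iff)
  also have "\<dots> \<in> ps.span (monomial ` A)"
    by (intro ps.span_sum ps.span_scale ps.span_base) auto
  finally show ?thesis .
qed

lemma range_hermite_comb:
  "range (hermite_comb m k) = {P :: 'n::finite rpoly. \<forall>\<alpha>. P \<alpha> \<noteq> 0 \<longrightarrow> \<alpha> \<in> reduced_exps m k}"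
proof
  show "range (hermite_comb m k) \<subseteq> {P :: 'n rpoly. \<forall>\<alpha>. P \<alpha> \<noteq> 0 \<longrightarrow> \<alpha> \<in> reduced_exps m k}"
    using hermite_comb_support_reduced by blast
  let ?B = "hermite_basis m ` hermite_index m k :: 'n rpoly set"
    and ?W = "monomial ` reduced_exps m k :: 'n rpoly set"
  have "ps.span ?B = ps.span ?W"
  proof (rule ps.span_eq_of_independent_card_ge[OF independent_hermite_basis])
    show "?B \<subseteq> ps.span ?W"
    proof
      fix v assume "v \<in> ?B"
      then obtain x where "x \<in> hermite_index m k" "v = hermite_basis m x"
        by blast
      then show "v \<in> ps.span ?W"
        using hermite_basis_support_reduced[of x m k]
        by (intro in_span_monomials[OF finite_reduced_exps]) auto
    qed
    have "card ?W \<le> card (reduced_exps m k :: 'n multiindex set)"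
      by (rule card_image_le[OF finite_reduced_exps])
    also have "\<dots> \<le> card (hermite_index m k :: 'n basis_index set)"
      by (rule card_reduced_exps_le)
    also have "\<dots> = card ?B"
      by (rule card_image[OF inj_on_hermite_basis, symmetric])
    finally show "card ?W \<le> card ?B" .
  qed (simp add: finite_reduced_exps)
  show "{P :: 'n rpoly. \<forall>\<alpha>. P \<alpha> \<noteq> 0 \<longrightarrow> \<alpha> \<in> reduced_exps m k} \<subseteq> range (hermite_comb m k)"
  proof
    fix P :: "'n rpoly"
    assume "P \<in> {P. \<forall>\<alpha>. P \<alpha> \<noteq> 0 \<longrightarrow> \<alpha> \<in> reduced_exps m k}"
    then have "P \<in> ps.span ?W"
      by (intro in_span_monomials finite_reduced_exps) auto
    then show "P \<in> range (hermite_comb m k)"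
      using \<open>ps.span ?B = ps.span ?W\<close> by (simp add: span_hermite_basis)
  qed
qed

section \<open>Reduced polynomials as a common kernel\<close>

lemma ex_list_scaled_count_le_iff:
  fixes \<alpha> :: "'n::finite multiindex"
  shows "(\<exists>is::'n list. length is = k \<and> (\<forall>i. (m + 1) * count_list is i \<le> \<alpha> i))
    \<longleftrightarrow> k \<le> (\<Sum>i\<in>UNIV. \<alpha> i div (m + 1))"
proof
  assume "\<exists>is::'n list. length is = k \<and> (\<forall>i. (m + 1) * count_list is i \<le> \<alpha> i)"
  then obtain "is" :: "'n list" where "length is = k" "\<And>i. (m + 1) * count_list is i \<le> \<alpha> i"
    by blast
  then have "count_list is i \<le> \<alpha> i div (m + 1)" for i
    by (metis div_le_mono nonzero_mult_div_cancel_left add_eq_0_iff_both_eq_0 one_neq_zero)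
  then have "sum (count_list is) UNIV \<le> (\<Sum>i\<in>UNIV. \<alpha> i div (m + 1))"
    by (intro sum_mono)
  then show "k \<le> (\<Sum>i\<in>UNIV. \<alpha> i div (m + 1))"
    using \<open>length is = k\<close> by (simp add: length_eq_sum_count_list)
next
  assume "k \<le> (\<Sum>i\<in>UNIV. \<alpha> i div (m + 1))"
  define xs where "xs = list_of_counts (\<lambda>i. \<alpha> i div (m + 1))"
  have "k \<le> length xs"
    using \<open>k \<le> _\<close> by (simp add: xs_def length_eq_sum_count_list count_list_list_of_counts)
  then have "length (take k xs) = k"
    by simp
  moreover have "(m + 1) * count_list (take k xs) i \<le> \<alpha> i" for i
  proof -
    have "count_list (take k xs) i \<le> \<alpha> i div (m + 1)"
      using count_list_append[of "take k xs" "drop k xs" i]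
      by (simp add: xs_def count_list_list_of_counts)
    then show ?thesis
      by (metis le_trans mult_le_mono2 times_div_less_eq_dividend)
  qed
  ultimately show "\<exists>is::'n list. length is = k \<and> (\<forall>i. (m + 1) * count_list is i \<le> \<alpha> i)"
    by blast
qed

lemma reduced_exps_iff_no_power_list:
  fixes \<alpha> :: "'n::finite multiindex"
  assumes "k \<ge> 1"
  shows "\<alpha> \<in> reduced_exps m k \<longleftrightarrow> \<not> (\<exists>is::'n list. length is = k \<and> (\<forall>i. (m + 1) * count_list is i \<le> \<alpha> i))"
  unfolding reduced_exps_def ex_list_scaled_count_le_iff using assms by auto

lemma mdeg_top_exp: "mdeg (top_exp m q :: 'n::finite multiindex) = (m + 1) * sum q UNIV + m * CARD('n)"
  by (simp add: mdeg_def top_exp_def sum.distrib sum_distrib_left)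

lemma reduced_exps_mdeg_ge_imp_top_exp:
  fixes \<alpha> :: "'n::finite multiindex"
  assumes "\<alpha> \<in> reduced_exps m k" "(m + 1) * (k - 1) + m * CARD('n) \<le> mdeg \<alpha>"
  defines "q \<equiv> \<lambda>i. \<alpha> i div (m + 1)"
  shows "sum q UNIV = k - 1" "\<alpha> = top_exp m q"
proof -
  let ?r = "\<lambda>i. \<alpha> i mod (m + 1)"
  have "mdeg \<alpha> = (\<Sum>i\<in>UNIV. (m + 1) * q i + ?r i)"
    unfolding mdeg_def q_def by (simp only: mult_div_mod_eq)
  then have split: "mdeg \<alpha> = (m + 1) * sum q UNIV + sum ?r UNIV"
    by (simp add: sum.distrib sum_distrib_left)
  have "sum q UNIV \<le> k - 1"
    using assms(1) by (simp add: reduced_exps_def q_def)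
  then have "(m + 1) * sum q UNIV \<le> (m + 1) * (k - 1)"
    by (rule mult_le_mono2)
  moreover have "sum ?r UNIV \<le> m * CARD('n)"
    using sum_mono[of UNIV ?r "\<lambda>_. m"] mod_Suc_le by (simp add: mult.commute)
  ultimately have "(m + 1) * sum q UNIV = (m + 1) * (k - 1)" and r_eq: "sum ?r UNIV = m * CARD('n)"
    using assms(2) split by linarith+
  then show "sum q UNIV = k - 1"
    by (simp only: mult_cancel1) simp
  have "?r i = m" for i
  proof (rule ccontr)
    assume "?r i \<noteq> m"
    then have "?r i < m"
      using mod_Suc_le[of "\<alpha> i" m] by linarith
    then have "sum ?r UNIV < (\<Sum>i\<in>(UNIV :: 'n set). m)"
      by (intro sum_strict_mono_ex1) (auto intro: mod_Suc_le)
    then show False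
      using r_eq by (simp add: mult.commute)
  qed
  then show "\<alpha> = top_exp m q"
    unfolding top_exp_def q_def by (metis mult_div_mod_eq ext)
qed

lemma reduced_iff:
  fixes P :: "'n::finite rpoly"
  assumes "m \<ge> 1" "k \<ge> 1"
  shows "reduced m k P \<longleftrightarrow>
    (\<forall>\<alpha>. P \<alpha> \<noteq> 0 \<longrightarrow> \<alpha> \<in> reduced_exps m k) \<and> (\<forall>q. sum q UNIV = k - 1 \<longrightarrow> P (top_exp m q) = 0)"
    (is "_ \<longleftrightarrow> ?rhs")
proof -
  have "m * CARD('n) \<ge> 1"
    using assms(1) by (simp add: Suc_le_eq)
  then have deg_iff: "mdeg \<alpha> \<le> m * CARD('n) + (m + 1) * (k - 1) - 1 \<longleftrightarrow>
      \<not> (m + 1) * (k - 1) + m * CARD('n) \<le> mdeg \<alpha>" for \<alpha> :: "'n multiindex"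
    by linarith
  have tops: "\<not> mdeg (top_exp m q :: 'n multiindex) \<le> m * CARD('n) + (m + 1) * (k - 1) - 1"
    if "sum q UNIV = k - 1" for q :: "'n multiindex"
    unfolding mdeg_top_exp that using \<open>m * CARD('n) \<ge> 1\<close> by linarith
  show ?thesis
  proof
    assume "reduced m k P"
    then show ?rhs
      using tops unfolding reduced_def deg_le_def reduced_exps_iff_no_power_list[OF assms(2)] by blast
  next
    assume R: ?rhs
    have "mdeg \<alpha> \<le> m * CARD('n) + (m + 1) * (k - 1) - 1" if "P \<alpha> \<noteq> 0" for \<alpha>
    proof (rule ccontr)
      assume "\<not> ?thesis"
      then have "(m + 1) * (k - 1) + m * CARD('n) \<le> mdeg \<alpha>"
        using deg_iff by blast
      then show False
        using R that reduced_exps_mdeg_ge_imp_top_exp[of \<alpha> m k] by metis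
    qed
    then show "reduced m k P"
      using R unfolding reduced_def deg_le_def reduced_exps_iff_no_power_list[OF assms(2)] by blast
  qed
qed

type_synonym 'n constraint_index = "'n basis_index + 'n multiindex"

definition constraint :: "nat \<Rightarrow> 'n::finite constraint_index \<Rightarrow> 'n rpoly \<Rightarrow> real" where
  "constraint m j P = (case j of
      Inl (b, \<beta>) \<Rightarrow> peval (pdiffs (list_of_counts \<beta>) P) (\<lambda>i. real (b i))
    | Inr q \<Rightarrow> P (top_exp m q))"

definition U_constraints :: "nat \<Rightarrow> nat \<Rightarrow> 'n::finite constraint_index set" where
  "U_constraints m k = Inl ` ((grid m - {\<lambda>_. 0}) \<times> exps_deg_le (k - 1)) \<union> Inr ` {q. sum q UNIV = k - 1}"

definition origin_constraints :: "nat \<Rightarrow> 'n::finite constraint_index set" where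
  "origin_constraints k = Inl ` ({\<lambda>_. 0} \<times> exps_deg_le (k - 2))"

lemma constraint_Inl_hermite_comb:
  "constraint m (Inl (b, \<beta>)) (hermite_comb m k c) = (\<Sum>x\<in>hermite_index m k. c x * hermite_jet m x b \<beta>)"
  by (simp add: constraint_def peval_pdiffs_hermite_comb count_list_list_of_counts)

lemma constraint_Inr: "constraint m (Inr q) P = P (top_exp m q)"
  by (simp add: constraint_def)

lemma constraint_add:
  assumes "P \<in> range (hermite_comb m k)" "Q \<in> range (hermite_comb m k)"
  shows "constraint m j (P + Q) = constraint m j P + constraint m j Q"
proof (cases j)
  case (Inl x)
  obtain c d where "P = hermite_comb m k c" "Q = hermite_comb m k d"
    using assms by blast
  moreover have "hermite_comb m k c + hermite_comb m k d = hermite_comb m k (\<lambda>x. c x + d x)"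
    by (simp add: hermite_comb_def fun_eq_iff sum.distrib distrib_right)
  ultimately show ?thesis
    using Inl by (cases x) (simp add: constraint_Inl_hermite_comb sum.distrib distrib_right)
qed (simp add: constraint_Inr)

lemma constraint_scale:
  assumes "P \<in> range (hermite_comb m k)"
  shows "constraint m j (pscale r P) = r * constraint m j P"
proof (cases j)
  case (Inl x)
  obtain c where "P = hermite_comb m k c"
    using assms by blast
  moreover have "pscale r (hermite_comb m k c) = hermite_comb m k (\<lambda>x. r * c x)"
    by (simp add: hermite_comb_def fun_eq_iff pscale_def sum_distrib_left mult.assoc)
  ultimately show ?thesis
    using Inl by (cases x) (simp add: constraint_Inl_hermite_comb sum_distrib_left mult.assoc)
qed (simp add: constraint_Inr pscale_def)

lemma zero_mult_ge_hermite_comb_iff: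
  fixes c :: "'n::finite basis_index \<Rightarrow> real"
  assumes "k \<ge> 1"
  shows "zero_mult_ge (hermite_comb m k c) k (\<lambda>i. real (b i))
    \<longleftrightarrow> (\<forall>\<beta>\<in>exps_deg_le (k - 1). constraint m (Inl (b, \<beta>)) (hermite_comb m k c) = 0)"
  unfolding zero_mult_ge_def constraint_Inl_hermite_comb peval_pdiffs_hermite_comb
proof safe
  fix \<beta> :: "'n multiindex"
  assume H: "\<forall>is. length is < k \<longrightarrow> (\<Sum>x\<in>hermite_index m k. c x * hermite_jet m x b (count_list is)) = 0"
    and "\<beta> \<in> exps_deg_le (k - 1)"
  then show "(\<Sum>x\<in>hermite_index m k. c x * hermite_jet m x b \<beta>) = 0"
    using assms H[rule_format, of "list_of_counts \<beta>"]
    by (simp add: count_list_list_of_counts length_eq_sum_count_list exps_deg_le_def)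
next
  fix "is" :: "'n list"
  assume "\<forall>\<beta>\<in>exps_deg_le (k - 1). (\<Sum>x\<in>hermite_index m k. c x * hermite_jet m x b \<beta>) = 0"
    and "length is < k"
  then show "(\<Sum>x\<in>hermite_index m k. c x * hermite_jet m x b (count_list is)) = 0"
    by (simp add: length_eq_sum_count_list exps_deg_le_def)
qed

lemma U_constraints_vanish_iff:
  assumes "k \<ge> 2" "P \<in> range (hermite_comb m k)"
  shows "(\<forall>j\<in>U_constraints m k. constraint m j P = 0) \<longleftrightarrow>
    (\<forall>a\<in>grid m - {\<lambda>_. 0}. zero_mult_ge P k (\<lambda>i. real (a i))) \<and>
    (\<forall>q. sum q UNIV = k - 1 \<longrightarrow> P (top_exp m q) = 0)"
proof -
  obtain c where "P = hermite_comb m k c"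
    using assms(2) by blast
  then show ?thesis
    using assms(1)
    by (simp add: U_constraints_def zero_mult_ge_hermite_comb_iff constraint_Inr ball_Un Ball_image_comp)
qed

lemma is_poly_if_support_reduced: "(\<forall>\<alpha>. P \<alpha> \<noteq> 0 \<longrightarrow> \<alpha> \<in> reduced_exps m k) \<Longrightarrow> is_poly P"
  unfolding is_poly_def by (rule finite_subset[OF _ finite_reduced_exps]) auto

lemma mem_U_iff:
  assumes "m \<ge> 1" "k \<ge> 1"
  shows "P \<in> U m k \<longleftrightarrow> P \<in> range (hermite_comb m k) \<and>
    (\<forall>a\<in>grid m - {\<lambda>_. 0}. zero_mult_ge P k (\<lambda>i. real (a i))) \<and>
    (\<forall>q. sum q UNIV = k - 1 \<longrightarrow> P (top_exp m q) = 0)"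
  unfolding U_def reduced_iff[OF assms] range_hermite_comb
  by (auto simp: grid_def intro: is_poly_if_support_reduced)

lemma U_eq_common_kernel:
  assumes "m \<ge> 1" "k \<ge> 2"
  shows "U m k = {P :: 'n::finite rpoly \<in> range (hermite_comb m k). \<forall>j\<in>U_constraints m k. constraint m j P = 0}"
proof (intro set_eqI)
  fix P :: "'n rpoly"
  show "P \<in> U m k \<longleftrightarrow> P \<in> {P \<in> range (hermite_comb m k). \<forall>j\<in>U_constraints m k. constraint m j P = 0}"
    using assms U_constraints_vanish_iff[of k P m] by (auto simp: mem_U_iff)
qed

section \<open>Dimension count\<close>

lemma hermite_comb_eq_0_if_constraints:
  fixes P :: "'n::finite rpoly"
  assumes "k \<ge> 1" "P \<in> range (hermite_comb m k)"
    and vanish: "\<And>j. j \<in> U_constraints m k \<union> origin_constraints k \<Longrightarrow> constraint m j P = 0"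
  shows "P = (\<lambda>_. 0)"
proof -
  obtain c where P: "P = hermite_comb m k c"
    using assms(2) by blast
  have "c x = 0" if "x \<in> hermite_index m k" for x
  proof (rule hermite_coeffs_eq_0[OF _ _ that])
    fix q b :: "'n multiindex"
    assume "q \<in> exps_deg_le (k - 1)" "b \<in> grid m" "b \<noteq> (\<lambda>_. 0) \<or> sum q UNIV < k - 1"
    then have "Inl (b, q) \<in> U_constraints m k \<union> origin_constraints k"
      by (auto simp: U_constraints_def origin_constraints_def exps_deg_le_def)
    then show "(\<Sum>x\<in>hermite_index m k. c x * hermite_jet m x b q) = 0"
      using vanish by (simp only: P constraint_Inl_hermite_comb[symmetric])
  next
    fix q :: "'n multiindex"
    assume "sum q UNIV = k - 1"
    then have "Inr q \<in> U_constraints m k"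
      by (simp add: U_constraints_def)
    then show "(\<Sum>a\<in>grid m. c (q, a)) = 0"
      using vanish[of "Inr q"] \<open>sum q UNIV = k - 1\<close> by (simp add: P constraint_Inr hermite_comb_top_exp)
  qed
  then show ?thesis
    by (simp add: P hermite_comb_def fun_eq_iff)
qed

lemma dim_le_dim_constraint_kernel_add_card:
  assumes "finite J" "ps.subspace V" "V \<subseteq> range (hermite_comb m k)"
  shows "ps.dim V \<le> ps.dim {P \<in> V. \<forall>j\<in>J. constraint m j P = 0} + card J"
proof (rule ps.dim_le_dim_common_kernel_add_card[OF assms(1,2)])
  show "V \<subseteq> ps.span (hermite_basis m ` hermite_index m k)"
    using assms(3) by (simp add: span_hermite_basis)
  show "finite (hermite_basis m ` hermite_index m k)"
    by (simp add: finite_hermite_index)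
  show "constraint m j (P + Q) = constraint m j P + constraint m j Q" if "P \<in> V" "Q \<in> V" for j P Q
    using that assms(3) by (intro constraint_add) auto
  show "constraint m j (pscale r P) = r * constraint m j P" if "P \<in> V" for j r P
    using that assms(3) by (intro constraint_scale) auto
qed

lemma finite_U_constraints: "finite (U_constraints m k :: 'n::finite constraint_index set)"
proof -
  have "finite {q :: 'n multiindex. sum q UNIV = k - 1}"
    by (rule finite_subset[OF _ finite_exps_deg_le]) (auto simp: exps_deg_le_def)
  then show ?thesis
    unfolding U_constraints_def by (simp add: finite_grid finite_exps_deg_le finite_imageI)
qed

lemma finite_origin_constraints: "finite (origin_constraints k)"
  by (simp add: origin_constraints_def finite_exps_deg_le)

lemma card_constraints_eq_card_hermite_index:
  assumes "k \<ge> 2"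
  shows "card (U_constraints m k :: 'n::finite constraint_index set)
      + card (origin_constraints k :: 'n constraint_index set)
    = card (hermite_index m k :: 'n basis_index set)"
proof -
  let ?Q = "exps_deg_le :: nat \<Rightarrow> 'n multiindex set" and ?G = "grid m :: 'n multiindex set"
  have "{q. sum q UNIV = k - 1} = ?Q (k - 1) - ?Q (k - 2)"
    using assms by (auto simp: exps_deg_le_def)
  then have "card (U_constraints m k :: 'n constraint_index set)
      = card (?G - {\<lambda>_. 0}) * card (?Q (k - 1)) + card (?Q (k - 1) - ?Q (k - 2))"
    unfolding U_constraints_def
    by (subst card_Un_disjoint) (auto simp: card_image card_cartesian_product finite_exps_deg_le finite_grid)
  moreover have "card (origin_constraints k :: 'n constraint_index set) = card (?Q (k - 2))"
    by (simp add: origin_constraints_def card_image card_cartesian_product)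
  moreover have "card ?G = Suc (card (?G - {\<lambda>_. 0}))"
    by (rule card.remove[OF finite_grid]) (simp add: grid_def)
  moreover have "card (?Q (k - 2)) \<le> card (?Q (k - 1))"
    by (intro card_mono finite_exps_deg_le exps_deg_le_mono) simp
  then have "card (?Q (k - 1) - ?Q (k - 2)) + card (?Q (k - 2)) = card (?Q (k - 1))"
    by (simp add: card_Diff_subset finite_exps_deg_le exps_deg_le_mono)
  ultimately show ?thesis
    by (simp add: hermite_index_def card_cartesian_product mult.commute; linarith)
qed

lemma card_origin_constraints:
  "card (origin_constraints k :: 'n::finite constraint_index set)
    = card (exps_deg_le (k - 2) :: 'n multiindex set)"
  by (simp add: origin_constraints_def card_image card_cartesian_product)

lemma subspace_U:
  assumes "m \<ge> 1" "k \<ge> 2"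
  shows "ps.subspace (U m k :: 'n::finite rpoly set)"
proof -
  have "ps.subspace (range (hermite_comb m k) :: 'n rpoly set)"
    unfolding span_hermite_basis[symmetric] by (rule ps.subspace_span)
  then show ?thesis
    unfolding U_eq_common_kernel[OF assms]
    by (rule ps.subspace_common_kernel) (auto intro: constraint_add constraint_scale)
qed

lemma dim_U_le:
  assumes "m \<ge> 1" "k \<ge> 2"
  shows "ps.dim (U m k :: 'n::finite rpoly set)
    \<le> card (origin_constraints k :: 'n constraint_index set)"
proof -
  let ?K = "{P \<in> U m k :: 'n rpoly set. \<forall>j\<in>origin_constraints k. constraint m j P = 0}"
  have "ps.dim (U m k :: 'n rpoly set) \<le> ps.dim ?K + card (origin_constraints k :: 'n constraint_index set)"
    by (rule dim_le_dim_constraint_kernel_add_card[OF finite_origin_constraints subspace_U[OF assms]])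
      (use U_eq_common_kernel[OF assms] in auto)
  moreover have "?K \<subseteq> ps.span {}"
    using assms hermite_comb_eq_0_if_constraints[of k _ m]
    by (auto simp: U_eq_common_kernel ps.span_empty zero_fun_def)
  then have "ps.dim ?K = 0"
    using ps.dim_le_card[of _ "{}"] by simp
  ultimately show ?thesis
    by simp
qed

lemma card_origin_constraints_le_dim_U:
  assumes "m \<ge> 1" "k \<ge> 2"
  shows "card (origin_constraints k :: 'n::finite constraint_index set)
    \<le> ps.dim (U m k :: 'n rpoly set)"
proof -
  have "card (hermite_index m k :: 'n basis_index set)
      \<le> ps.dim (U m k :: 'n rpoly set) + card (U_constraints m k :: 'n constraint_index set)"
    unfolding dim_range_hermite_comb[symmetric] U_eq_common_kernel[OF assms]
    by (intro dim_le_dim_constraint_kernel_add_card finite_U_constraints)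
      (auto simp flip: span_hermite_basis intro: ps.subspace_span)
  then show ?thesis
    using card_constraints_eq_card_hermite_index[OF assms(2), of m, where 'n = 'n] by simp
qed

lemma dim_U:
  assumes "m \<ge> 1" "k \<ge> 2"
  shows "ps.dim (U m k :: 'n::finite rpoly set) = card (exps_deg_le (k - 2) :: 'n multiindex set)"
  using dim_U_le[OF assms, where 'n = 'n] card_origin_constraints_le_dim_U[OF assms, where 'n = 'n]
  by (simp add: card_origin_constraints)

theorem lemma4p1:
  fixes m k :: nat
  assumes "m \<ge> 1" and "k \<ge> 2"
  shows "vector_space.dim pscale (U m k :: ('n::finite) rpoly set) = M (k - 1) CARD('n)
       \<and> M (k - 1) CARD('n) = (CARD('n) + k - 2) choose CARD('n)"
proof -
  have "CARD('n) + (k - 1) - 1 = CARD('n) + (k - 2)" "CARD('n) + k - 2 = CARD('n) + (k - 2)"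
    using assms(2) by simp_all
  then show ?thesis
    using dim_U[OF assms] by (simp add: M_def card_exps_deg_le)
qed

end
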